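(* Let $T>0$, $N\ge1$, and $p\in L^2([0,T])$. Then $$\sum_{n=0}^{N-1}(2n+1)\Big(\int_0^T p(t)\tilde L_n(t)\,dt\Big)^2\;\le\;N^3\sum_{j=1}^N r_j\Big(\int_0^T p(t)\psi_j^{(1)}(t)\,dt\Big)^2,\qquad r_j:=N^{-3}\sum_{k=j}^N k(2k-1).$$
   Context: $L_n$ is the $n$-th Legendre polynomial on $[-1,1]$ (normalized by $L_n(1)=1$) and $\tilde L_n(t):=L_n(\tfrac{2t}{T}-1)$ for $t\in[0,T]$. Define $\psi_1^{(1)}:=\tilde L_0\equiv1$ and $\psi_n^{(1)}:=\tilde L_{n-1}-\tilde L_{n-2}$ for $n\ge2$. *)

theory Defs
  imports "HOL-Analysis.Analysis"
begin

text \<open>Legendre polynomials on [-1,1], normalized by L_n(1) = 1, via Bonnet's recursion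
  (n+2) L_(n+2)(x) = (2n+3) x L_(n+1)(x) - (n+1) L_n(x).\<close>
fun legendre :: "nat \<Rightarrow> real \<Rightarrow> real" where
  "legendre 0 x = 1"
| "legendre (Suc 0) x = x"
| "legendre (Suc (Suc n)) x =
     ((2 * real n + 3) * x * legendre (Suc n) x - (real n + 1) * legendre n x) / (real n + 2)"

definition shifted_legendre :: "real \<Rightarrow> nat \<Rightarrow> real \<Rightarrow> real" where
  "shifted_legendre T n t = legendre n (2 * t / T - 1)"

definition psi1 :: "real \<Rightarrow> nat \<Rightarrow> real \<Rightarrow> real" where
  "psi1 T n t = (if n \<le> 1 then 1
                 else shifted_legendre T (n - 1) t - shifted_legendre T (n - 2) t)"

definition rcoef :: "nat \<Rightarrow> nat \<Rightarrow> real" where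
  "rcoef N j = (\<Sum>k=j..N. real k * (2 * real k - 1)) / real N ^ 3"

end

theory Submission
  imports Defs
begin

text \<open>Since \<open>\<psi>_1 = L_0\<close> and \<open>\<psi>_j = L_(j-1) - L_(j-2)\<close>, the Legendre coefficients \<open>a_n\<close>
  of \<open>p\<close> telescope into its \<open>\<psi>\<close>-coefficients: \<open>a_n = b_1 + \<dots> + b_(n+1)\<close>. Cauchy-Schwarz
  gives \<open>a_n\<^sup>2 \<le> (n+1) (b_1\<^sup>2 + \<dots> + b_(n+1)\<^sup>2)\<close>, and exchanging the order of summation in
  \<open>\<Sum>_n (2n+1)(n+1) \<Sum>_(j\<le>n+1) b_j\<^sup>2\<close> produces exactly the weights \<open>N\<^sup>3 r_j\<close>.\<close>

lemma continuous_on_legendre: "continuous_on S (legendre n)"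
proof (induction n rule: less_induct)
  case (less n)
  consider "n = 0" | "n = 1" | m where "n = Suc (Suc m)"
    by (metis One_nat_def not0_implies_Suc)
  then show ?case
  proof cases
    case 3
    then have "legendre n = (\<lambda>x. ((2 * real m + 3) * x * legendre (Suc m) x
                                  - (real m + 1) * legendre m x) / (real m + 2))"
      by (simp add: fun_eq_iff)
    with 3 less show ?thesis
      by (auto intro!: continuous_intros)
  qed (simp_all add: fun_eq_iff continuous_on_id)
qed

lemma continuous_on_shifted_legendre: "continuous_on S (shifted_legendre T n)"
  unfolding shifted_legendre_def
  by (rule continuous_on_compose2[OF continuous_on_legendre[of UNIV]])
    (auto simp: divide_inverse intro!: continuous_on_diff continuous_on_mult_right continuous_on_mult_left)

lemma set_integrable_mult_square_integrable:
  fixes f g :: "'a \<Rightarrow> real"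
  assumes "set_borel_measurable M A f" "set_borel_measurable M A g"
    and "set_integrable M A (\<lambda>x. (f x)\<^sup>2)" "set_integrable M A (\<lambda>x. (g x)\<^sup>2)"
  shows "set_integrable M A (\<lambda>x. f x * g x)"
proof -
  have bound: "\<bar>u * v\<bar> \<le> u\<^sup>2 + v\<^sup>2" for u v :: real
    using sum_squares_bound[of "\<bar>u\<bar>" "\<bar>v\<bar>"] abs_ge_zero[of "u * v"]
    unfolding abs_mult power2_abs by linarith
  have "integrable M (\<lambda>x. indicator A x *\<^sub>R (f x)\<^sup>2 + indicator A x *\<^sub>R (g x)\<^sup>2)"
    using assms(3,4) unfolding set_integrable_def by auto
  moreover have "(\<lambda>x. (indicator A x *\<^sub>R f x) * (indicator A x *\<^sub>R g x)) \<in> borel_measurable M"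
    using assms(1,2) unfolding set_borel_measurable_def by measurable
  then have "(\<lambda>x. indicator A x *\<^sub>R (f x * g x)) \<in> borel_measurable M"
    by (rule measurable_cong[THEN iffD1, rotated]) (simp add: indicator_def)
  ultimately show ?thesis
    unfolding set_integrable_def
  proof (rule Bochner_Integration.integrable_bound)
    show "AE x in M. norm (indicator A x *\<^sub>R (f x * g x))
        \<le> norm (indicator A x *\<^sub>R (f x)\<^sup>2 + indicator A x *\<^sub>R (g x)\<^sup>2)"
      using bound by (intro AE_I2) (simp add: indicator_def)
  qed
qed

lemma set_integrable_mult_shifted_legendre:
  assumes "set_borel_measurable lborel {0..T} p"
    and "set_integrable lborel {0..T} (\<lambda>t. (p t)\<^sup>2)"
  shows "set_integrable lborel {0..T} (\<lambda>t. p t * shifted_legendre T n t)"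
proof (rule set_integrable_mult_square_integrable[OF assms(1) _ assms(2)])
  show "set_borel_measurable lborel {0..T} (shifted_legendre T n)"
    unfolding set_borel_measurable_def measurable_lborel2
    by (intro borel_measurable_continuous_on_indicator continuous_on_shifted_legendre) simp
  show "set_integrable lborel {0..T} (\<lambda>t. (shifted_legendre T n t)\<^sup>2)"
    unfolding set_integrable_def
    by (rule borel_integrable_compact) (auto intro!: continuous_intros continuous_on_shifted_legendre)
qed

lemma sum_prefix_sums_swap:
  fixes w c :: "nat \<Rightarrow> 'a :: comm_semiring_1"
  shows "(\<Sum>n<N. w (n + 1) * (\<Sum>j=1..n+1. c j)) = (\<Sum>j=1..N. (\<Sum>k=j..N. w k) * c j)"
proof (induction N)
  case 0
  then show ?case by simp
next
  case (Suc N)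
  have "(\<Sum>n<Suc N. w (n + 1) * (\<Sum>j=1..n+1. c j))
      = (\<Sum>j=1..N. (\<Sum>k=j..N. w k) * c j) + w (Suc N) * (\<Sum>j=1..Suc N. c j)"
    by (simp only: sum.lessThan_Suc Suc.IH) simp
  also have "\<dots> = (\<Sum>j=1..Suc N. (\<Sum>k=j..N. w k) * c j + w (Suc N) * c j)"
    by (simp add: sum.distrib sum_distrib_left distrib_left)
  also have "\<dots> = (\<Sum>j=1..Suc N. (\<Sum>k=j..Suc N. w k) * c j)"
    by (rule sum.cong) (auto simp: sum.cl_ivl_Suc distrib_right)
  finally show ?case .
qed

lemma telescoping_prefix_sum:
  fixes a b :: "nat \<Rightarrow> 'a :: ab_group_add"
  assumes "b 1 = a 0" and "\<And>j. j \<ge> 2 \<Longrightarrow> b j = a (j - 1) - a (j - 2)"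
  shows "a n = (\<Sum>j=1..n+1. b j)"
proof (induction n)
  case 0
  then show ?case using assms(1) by simp
next
  case (Suc n)
  then show ?case using assms(2)[of "n + 2"] by simp
qed

lemma weighted_prefix_sums_squares_le:
  fixes b :: "nat \<Rightarrow> real"
  shows "(\<Sum>n<N. (2 * real n + 1) * (\<Sum>j=1..n+1. b j)\<^sup>2)
       \<le> (\<Sum>j=1..N. (\<Sum>k=j..N. real k * (2 * real k - 1)) * (b j)\<^sup>2)"
proof -
  have "(\<Sum>n<N. (2 * real n + 1) * (\<Sum>j=1..n+1. b j)\<^sup>2)
      \<le> (\<Sum>n<N. (2 * real n + 1) * real (n + 1) * (\<Sum>j=1..n+1. (b j)\<^sup>2))"
  proof (rule sum_mono)
    fix n
    have "(\<Sum>j=1..n+1. b j)\<^sup>2 \<le> real (n + 1) * (\<Sum>j=1..n+1. (b j)\<^sup>2)"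
      using sum_squared_le_sum_of_squares[of b "{1..n+1}"] by (simp add: mult.commute)
    then show "(2 * real n + 1) * (\<Sum>j=1..n+1. b j)\<^sup>2
             \<le> (2 * real n + 1) * real (n + 1) * (\<Sum>j=1..n+1. (b j)\<^sup>2)"
      by (simp add: mult.assoc mult_left_mono)
  qed
  also have "\<dots> = (\<Sum>j=1..N. (\<Sum>k=j..N. real k * (2 * real k - 1)) * (b j)\<^sup>2)"
    using sum_prefix_sums_swap[where w = "\<lambda>k. real k * (2 * real k - 1)" and c = "\<lambda>j. (b j)\<^sup>2"]
    by (simp add: algebra_simps)
  finally show ?thesis .
qed

theorem mainTheorem2:
  fixes T :: real and N :: nat and p :: "real \<Rightarrow> real"
  assumes "T > 0" and "N \<ge> 1"
    and "set_borel_measurable lborel {0..T} p"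
    and "set_integrable lborel {0..T} (\<lambda>t. (p t)\<^sup>2)"
  shows "(\<Sum>n<N. (2 * real n + 1) *
            (LINT t:{0..T}|lborel. p t * shifted_legendre T n t)\<^sup>2)
         \<le> real N ^ 3 * (\<Sum>j=1..N. rcoef N j *
            (LINT t:{0..T}|lborel. p t * psi1 T j t)\<^sup>2)"
proof -
  define a where "a n = (LINT t:{0..T}|lborel. p t * shifted_legendre T n t)" for n
  define b where "b j = (LINT t:{0..T}|lborel. p t * psi1 T j t)" for j
  note integrable = set_integrable_mult_shifted_legendre[OF assms(3,4)]
  have "b 1 = a 0"
    unfolding a_def b_def psi1_def shifted_legendre_def by simp
  moreover have "b j = a (j - 1) - a (j - 2)" if "j \<ge> 2" for j
    unfolding a_def b_def psi1_def using that
    by (simp add: right_diff_distrib set_integral_diff(2)[OF integrable integrable])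
  ultimately have telescope: "a n = (\<Sum>j=1..n+1. b j)" for n
    by (rule telescoping_prefix_sum)
  have "(\<Sum>n<N. (2 * real n + 1) * (a n)\<^sup>2)
      \<le> (\<Sum>j=1..N. (\<Sum>k=j..N. real k * (2 * real k - 1)) * (b j)\<^sup>2)"
    unfolding telescope by (rule weighted_prefix_sums_squares_le)
  also have "\<dots> = real N ^ 3 * (\<Sum>j=1..N. rcoef N j * (b j)\<^sup>2)"
    using assms(2) by (simp add: rcoef_def sum_distrib_left)
  finally show ?thesis
    unfolding a_def b_def .
qed

end
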